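(* Let $N\ge 1$, $k\ge 1$ and $1\le m\le k$ be integers. For each $n\in\{m,\ldots,k\}$ let $\mathcal{Q}^{(n)}=\left(q^{(n)}_1,\ldots,q^{(n)}_{N^n}\right)$ be a tuple of vectors $q^{(n)}_l\in\Delta^N$. Define $N\times N$ matrices recursively by $\overline{Q}^{(k+1)}_i:=E_N$ for $1\le i\le N^k$, and, for $n=k,k-1,\ldots,m$ and $1\le i\le N^{n-1}$, $$\overline{Q}^{(n)}_i:=\left(\overline{Q}^{(n+1)}_{N(i-1)+1}\,q^{(n)}_{N(i-1)+1},\ \overline{Q}^{(n+1)}_{N(i-1)+2}\,q^{(n)}_{N(i-1)+2},\ \ldots,\ \overline{Q}^{(n+1)}_{N(i-1)+N}\,q^{(n)}_{N(i-1)+N}\right).$$ Then $$\mathcal{S}\left(\mathcal{Q}^{(m)},\ldots,\mathcal{Q}^{(k)}\right)=C^{(m)}_1\sum_{i=1}^{N^{m-1}}E_{N^{m-1},i}\otimes\overline{Q}^{(m)}_i.$$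
   Context: $\Delta^{n}$ denotes the set of probability vectors in $\mathbb{R}^n$ (column vectors with nonnegative entries summing to $1$). $E_n$ is the $n\times n$ identity matrix, $e_{n,i}$ the $i$-th standard basis column vector of $\mathbb{R}^n$, $E_{n,i}:=e_{n,i}e_{n,i}^{T}$, $\mathbf{1}_n\in\mathbb{R}^n$ the all-ones vector, and $\otimes$ the Kronecker product. The commutation matrix is $C_{n,m}:=\sum_{i=1}^{m}e_{m,i}^{T}\otimes E_n\otimes e_{m,i}$. For integers $k\ge 0$ and $0\le m\le k$ (with $N$ fixed): $M^{(k)}_m:=E_{N^m}\otimes\mathbf{1}_N^{T}\otimes E_{N^{k-m}}\in\mathbb{R}^{N^k\times N^{k+1}}$; for a tuple $\mathcal{Q}=(q_1,\ldots,q_{N^k})$ of vectors in $\Delta^N$, $B^{(k)}_m(\mathcal{Q}):=\sum_{i=1}^{N^m}\sum_{j=1}^{N^{k-m}}E_{N^m,i}\otimes q_{N^{k-m}(i-1)+j}\otimes E_{N^{k-m},j}\in\mathbb{R}^{N^{k+1}\times N^k}$; $C^{(k)}_m:=C_{N^m,N^{k-m}}$. The shift matrix of tuples $\mathcal{Q}^{(m)},\ldots,\mathcal{Q}^{(k)}$ (where $\mathcal{Q}^{(n)}$ has $N^n$ entries) is the $N^m\times N^m$ matrix $$\mathcal{S}\left(\mathcal{Q}^{(m)},\ldots,\mathcal{Q}^{(k)}\right):=M^{(m)}_m M^{(m+1)}_{m+1}\cdots M^{(k)}_k\,C^{(k+1)}_1\,B^{(k)}_k\left(\mathcal{Q}^{(k)}\right)B^{(k-1)}_{k-1}\left(\mathcal{Q}^{(k-1)}\right)\cdots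 B^{(m)}_m\left(\mathcal{Q}^{(m)}\right).$$ *)

theory Defs
  imports "Jordan_Normal_Form.Matrix"
begin

text \<open>All matrices and (column/row) vectors are JNF matrices of type real mat.
  Column vectors in R^n are n x 1 matrices. Paper indices (starting at 1) are kept 1-based.\<close>

definition kron :: "real mat \<Rightarrow> real mat \<Rightarrow> real mat" (infixl "\<otimes>\<^sub>K" 70) where
  "A \<otimes>\<^sub>K B = mat (dim_row A * dim_row B) (dim_col A * dim_col B)
     (\<lambda>(i,j). A $$ (i div dim_row B, j div dim_col B) * B $$ (i mod dim_row B, j mod dim_col B))"

definition msum :: "nat \<Rightarrow> nat \<Rightarrow> ('i \<Rightarrow> real mat) \<Rightarrow> 'i set \<Rightarrow> real mat" where
  "msum r c f S = mat r c (\<lambda>(a,b). \<Sum>x\<in>S. f x $$ (a,b))"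

definition ecol :: "nat \<Rightarrow> nat \<Rightarrow> real mat" where
  "ecol n i = mat n 1 (\<lambda>(a,b). if a = i - 1 then 1 else 0)"

definition Eii :: "nat \<Rightarrow> nat \<Rightarrow> real mat" where
  "Eii n i = ecol n i * transpose_mat (ecol n i)"

definition ones :: "nat \<Rightarrow> real mat" where
  "ones n = mat n 1 (\<lambda>_. 1)"

definition prob_vec :: "nat \<Rightarrow> real mat \<Rightarrow> bool" where
  "prob_vec n q \<longleftrightarrow> q \<in> carrier_mat n 1 \<and> (\<forall>a<n. q $$ (a,0) \<ge> 0) \<and> (\<Sum>a<n. q $$ (a,0)) = 1"

definition commat :: "nat \<Rightarrow> nat \<Rightarrow> real mat" where
  "commat n m = msum (n*m) (m*n)
     (\<lambda>i. transpose_mat (ecol m i) \<otimes>\<^sub>K 1\<^sub>m n \<otimes>\<^sub>K ecol m i) {1..m}"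

definition Mmat :: "nat \<Rightarrow> nat \<Rightarrow> nat \<Rightarrow> real mat" where
  "Mmat N k m = 1\<^sub>m (N^m) \<otimes>\<^sub>K transpose_mat (ones N) \<otimes>\<^sub>K 1\<^sub>m (N^(k-m))"

text \<open>B^{(k)}_m(Q), where Q l is the l-th (1-based) entry of the tuple\<close>
definition Bmat :: "nat \<Rightarrow> nat \<Rightarrow> nat \<Rightarrow> (nat \<Rightarrow> real mat) \<Rightarrow> real mat" where
  "Bmat N k m Q = msum (N^(k+1)) (N^k)
     (\<lambda>(i,j). Eii (N^m) i \<otimes>\<^sub>K Q (N^(k-m) * (i-1) + j) \<otimes>\<^sub>K Eii (N^(k-m)) j)
     ({1..N^m} \<times> {1..N^(k-m)})"

definition Cmat :: "nat \<Rightarrow> nat \<Rightarrow> nat \<Rightarrow> real mat" where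
  "Cmat N k m = commat (N^m) (N^(k-m))"

text \<open>Shift matrix S(Q^(m),...,Q^(k)); QQ n l is q^{(n)}_l.
  M^(m)_m ... M^(k)_k C^(k+1)_1 B^(k)_k(Q^(k)) ... B^(m)_m(Q^(m)).\<close>
definition shift_mat :: "nat \<Rightarrow> nat \<Rightarrow> nat \<Rightarrow> (nat \<Rightarrow> nat \<Rightarrow> real mat) \<Rightarrow> real mat" where
  "shift_mat N m k QQ =
     foldr (\<lambda>A acc. A * acc) (map (\<lambda>n. Mmat N n n) [m..<k+1]) (1\<^sub>m (N^(k+1)))
     * Cmat N (k+1) 1
     * foldr (\<lambda>A acc. A * acc) (map (\<lambda>n. Bmat N n n (QQ n)) (rev [m..<k+1])) (1\<^sub>m (N^m))"

text \<open>Qbar_aux N k QQ d i = \<overline>Q^{(k+1-d)}_i  (recursion from level k+1 downwards).\<close>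
fun Qbar_aux :: "nat \<Rightarrow> nat \<Rightarrow> (nat \<Rightarrow> nat \<Rightarrow> real mat) \<Rightarrow> nat \<Rightarrow> nat \<Rightarrow> real mat" where
  "Qbar_aux N k QQ 0 i = 1\<^sub>m N"
| "Qbar_aux N k QQ (Suc d) i =
     mat N N (\<lambda>(a,b). (Qbar_aux N k QQ d (N*(i-1)+b+1) * QQ (k-d) (N*(i-1)+b+1)) $$ (a,0))"

definition Qbar :: "nat \<Rightarrow> nat \<Rightarrow> (nat \<Rightarrow> nat \<Rightarrow> real mat) \<Rightarrow> nat \<Rightarrow> nat \<Rightarrow> real mat" where
  "Qbar N k QQ n i = Qbar_aux N k QQ (k + 1 - n) i"

end

theory Submission
  imports Defs
begin

text \<open>Index \<open>\<real>^(N^n)\<close> by strings of \<open>n\<close> base-\<open>N\<close> digits, most significant first. Then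
  \<open>M^(n)_n\<close> deletes the last digit and \<open>C^(k+1)_1\<close> moves the last digit to the front, so
  \<open>M^(m)_m \<cdots> M^(k)_k C^(k+1)_1\<close> is the 0-1 matrix sending a string \<open>t\<close> of length \<open>k+1\<close> to the first
  \<open>m\<close> digits of (last digit of \<open>t\<close>, rest of \<open>t\<close>). The product of the \<open>B\<close>'s has entry \<open>(t, y)\<close>
  equal to the product of the \<open>q\<close>'s along the path \<open>t\<close> if \<open>y\<close> is the prefix of length \<open>m\<close> of \<open>t\<close>,
  and \<open>0\<close> otherwise. Hence entry \<open>(x, y)\<close> of the shift matrix vanishes unless the last \<open>m-1\<close>
  digits of \<open>x\<close> are the first \<open>m-1\<close> digits of \<open>y\<close>, and is then the total weight of the paths
  extending \<open>y\<close> whose last digit is the first digit of \<open>x\<close>. Unrolling the recursion for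
  \<open>Q\<close>-bar shows that its entries are exactly such subtree weights, and multiplying the
  block-diagonal matrix by the permutation \<open>C^(m)_1\<close> puts them in the same places.\<close>

lemma mat_mult_mat: "mat a b f * mat b c g = mat a c (\<lambda>(i,j). \<Sum>t<b. f (i,t) * g (t,j))"
  by (rule eq_matI) (auto simp: scalar_prod_def atLeast0LessThan)

lemma dim_kron [simp]:
  "dim_row (A \<otimes>\<^sub>K B) = dim_row A * dim_row B" "dim_col (A \<otimes>\<^sub>K B) = dim_col A * dim_col B"
  by (simp_all add: kron_def)

lemma index_kron:
  "i < dim_row A * dim_row B \<Longrightarrow> j < dim_col A * dim_col B \<Longrightarrow>
   (A \<otimes>\<^sub>K B) $$ (i,j) = A $$ (i div dim_row B, j div dim_col B) * B $$ (i mod dim_row B, j mod dim_col B)"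
  by (simp add: kron_def)

lemma Eii_eq_mat: "Eii n i = mat n n (\<lambda>(a,b). if a = i - 1 \<and> b = i - 1 then 1 else 0)"
  by (rule eq_matI) (auto simp: Eii_def ecol_def scalar_prod_def)

lemma sum_lessThan_mult_split:
  fixes g :: "nat \<Rightarrow> 'a::comm_monoid_add"
  shows "(\<Sum>c<A * D. g c) = (\<Sum>u<A. \<Sum>t<D. g (u * D + t))"
proof -
  have "(\<Sum>t\<in>{u * D..<u * D + D}. g t) = (\<Sum>t<D. g (u * D + t))" for u
    using sum.shift_bounds_nat_ivl[of g 0 "u * D" D] by (simp add: atLeast0LessThan add.commute)
  then show ?thesis
    using sum.nat_group[of g D A] by simp
qed

lemma mult_add_less_mult:
  fixes u t :: nat
  assumes "u < A" and "t < D"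
  shows "u * D + t < A * D"
proof -
  have "u * D + t < Suc u * D"
    using assms(2) by simp
  also have "\<dots> \<le> A * D"
    using assms(1) by (intro mult_right_mono) auto
  finally show ?thesis .
qed

lemma mult_add_eq_iff_div_mod:
  fixes a b x E :: nat
  assumes "b < E"
  shows "a * E + b = x \<longleftrightarrow> x div E = a \<and> x mod E = b"
  using assms div_mult_mod_eq[of x E] by auto

lemma digit_rotation_div:
  fixes u s M N E :: nat
  assumes "s < M * N"
  shows "((u*(M*N) + s) mod N * (E*(M*N)) + (u*(M*N) + s) div N) div (M*N) = s mod N * E + u div N"
proof -
  have "M > 0" "N > 0"
    using assms by (auto intro: gr0I)
  then have "(u*(M*N) + s) mod N = s mod N" "(u*(M*N) + s) div N = u*M + s div N"
    by (simp_all add: mult.assoc[symmetric])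
  moreover have "(u*M + s div N) div (M*N) = u div N"
    using assms \<open>M > 0\<close> by (simp add: div_mult2_eq less_mult_imp_div_less)
  moreover have "s mod N * (E*(M*N)) = (s mod N * E) * (M*N)"
    by (simp add: mult.assoc)
  ultimately show ?thesis
    using \<open>M > 0\<close> \<open>N > 0\<close> by (simp only: div_mult_self3) simp
qed

section \<open>Selection matrices\<close>

definition sel_mat :: "nat \<Rightarrow> nat \<Rightarrow> (nat \<Rightarrow> nat) \<Rightarrow> real mat" where
  "sel_mat r c f = mat r c (\<lambda>(i,j). if i = f j then 1 else 0)"

lemma sel_mat_mult_sel_mat:
  assumes "\<And>j. j < c \<Longrightarrow> g j < b"
  shows "sel_mat a b f * sel_mat b c g = sel_mat a c (f \<circ> g)"
proof (rule eq_matI)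
  fix i j assume "i < dim_row (sel_mat a c (f \<circ> g))" "j < dim_col (sel_mat a c (f \<circ> g))"
  then have ij: "i < a" "j < c" by (simp_all add: sel_mat_def)
  have "(sel_mat a b f * sel_mat b c g) $$ (i,j)
      = (\<Sum>t<b. (if i = f t then 1 else 0) * (if t = g j then 1 else 0))"
    using ij by (simp add: sel_mat_def mat_mult_mat)
  also have "\<dots> = (\<Sum>t<b. if t = g j then (if i = f t then 1 else 0) else 0)"
    by (intro sum.cong) auto
  also have "\<dots> = sel_mat a c (f \<circ> g) $$ (i,j)"
    using ij assms by (simp add: sel_mat_def)
  finally show "(sel_mat a b f * sel_mat b c g) $$ (i,j) = sel_mat a c (f \<circ> g) $$ (i,j)" .
qed (simp_all add: sel_mat_def)

lemma index_sel_mat_mult: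
  assumes "i < a" "j < dim_col A" "dim_row A = b"
  shows "(sel_mat a b f * A) $$ (i,j) = (\<Sum>t<b. if f t = i then A $$ (t,j) else 0)"
  using assms by (auto simp: sel_mat_def scalar_prod_def atLeast0LessThan intro: sum.cong)

lemma Mmat_eq_sel_mat: "N \<ge> 1 \<Longrightarrow> Mmat N n n = sel_mat (N^n) (N^Suc n) (\<lambda>c. c div N)"
  by (rule eq_matI)
    (auto simp: Mmat_def sel_mat_def kron_def ones_def mult.commute less_mult_imp_div_less)

lemma Mmat_prod_eq_sel_mat:
  assumes "N \<ge> 1" and "m \<le> K"
  shows "foldr (\<lambda>A acc. A * acc) (map (\<lambda>n. Mmat N n n) [m..<K]) (1\<^sub>m (N^K))
    = sel_mat (N^m) (N^K) (\<lambda>c. c div N^(K-m))"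
  using assms(2)
proof (induction m rule: inc_induct)
  case base
  show ?case by (rule eq_matI) (auto simp: sel_mat_def)
next
  case (step m)
  have "K - m = Suc (K - Suc m)"
    using step.hyps by simp
  then have "(\<lambda>c. c div N) \<circ> (\<lambda>c. c div N^(K - Suc m)) = (\<lambda>c. c div N^(K-m))"
    by (simp add: fun_eq_iff flip: div_mult2_eq) (simp add: mult.commute)
  moreover have "c div N^(K - Suc m) < N^Suc m" if "c < N^K" for c
    using that step.hyps
    by (metis Suc_leI le_add_diff_inverse less_mult_imp_div_less power_add)
  ultimately show ?case
    using step by (simp add: upt_conv_Cons Mmat_eq_sel_mat[OF assms(1)] sel_mat_mult_sel_mat)
qed

lemma commat_eq_sel_mat: "commat n m = sel_mat (n*m) (m*n) (\<lambda>c. (c mod n) * m + c div n)"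
  (is "_ = ?rhs")
proof (rule eq_matI)
  fix r c assume "r < dim_row ?rhs" "c < dim_col ?rhs"
  then have r: "r < n*m" and c: "c < m*n" by (simp_all add: sel_mat_def)
  then have "r div m < n" "c div n < m" "0 < m" "0 < n"
    by (auto simp: less_mult_imp_div_less mult.commute intro: gr0I)
  have swap: "r div m = c mod n \<and> c div n = r mod m \<longleftrightarrow> r = (c mod n) * m + c div n"
  proof
    assume "r div m = c mod n \<and> c div n = r mod m"
    then show "r = (c mod n) * m + c div n"
      using div_mult_mod_eq[of r m] by simp
  next
    assume "r = (c mod n) * m + c div n"
    then show "r div m = c mod n \<and> c div n = r mod m"
      using \<open>c div n < m\<close> by simp
  qed
  have entry: "(transpose_mat (ecol m i) \<otimes>\<^sub>K 1\<^sub>m n \<otimes>\<^sub>K ecol m i) $$ (r,c) =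
      (if i = r mod m + 1 then (if r = (c mod n) * m + c div n then 1 else 0) else 0)"
    if "i \<in> {1..m}" for i
    unfolding swap[symmetric]
    using r c that \<open>r div m < n\<close> \<open>c div n < m\<close> by (auto simp: index_kron ecol_def mult.commute)
  have "commat n m $$ (r,c) = (\<Sum>i\<in>{1..m}. (transpose_mat (ecol m i) \<otimes>\<^sub>K 1\<^sub>m n \<otimes>\<^sub>K ecol m i) $$ (r,c))"
    using r c by (simp add: commat_def msum_def)
  also have "\<dots> = (if r = (c mod n) * m + c div n then 1 else 0)"
    using \<open>0 < m\<close> by (simp add: entry sum.delta Suc_leI)
  finally show "commat n m $$ (r,c) = ?rhs $$ (r,c)"
    using r c by (simp add: sel_mat_def)
qed (simp_all add: commat_def msum_def sel_mat_def)

lemma Cmat_eq_sel_mat: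
  assumes "n \<ge> 1"
  shows "Cmat N n 1 = sel_mat (N^n) (N^n) (\<lambda>c. (c mod N) * N^(n-1) + c div N)"
proof -
  have "N * N^(n-1) = N^n" "N^(n-1) * N = N^n"
    using assms by (simp_all flip: power_Suc power_Suc2)
  then show ?thesis
    by (simp add: Cmat_def commat_eq_sel_mat)
qed

lemma msum_Eii_kron_eq_block_diag:
  assumes "\<And>i. A i \<in> carrier_mat N N"
  shows "msum (n*N) (n*N) (\<lambda>i. Eii n i \<otimes>\<^sub>K A i) {1..n}
    = mat (n*N) (n*N) (\<lambda>(r,c). if r div N = c div N then A (r div N + 1) $$ (r mod N, c mod N) else 0)"
    (is "?lhs = ?rhs")
proof (rule eq_matI)
  fix r c assume "r < dim_row ?rhs" "c < dim_col ?rhs"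
  then have r: "r < n*N" and c: "c < n*N" by simp_all
  then have "r div N < n" "c div N < n"
    by (simp_all add: less_mult_imp_div_less)
  have entry: "(Eii n i \<otimes>\<^sub>K A i) $$ (r,c) = (if i = r div N + 1 then
      (if r div N = c div N then A (r div N + 1) $$ (r mod N, c mod N) else 0) else 0)"
    if "i \<in> {1..n}" for i
    using r c that assms[of i] \<open>r div N < n\<close> \<open>c div N < n\<close> by (auto simp: index_kron Eii_eq_mat)
  have "?lhs $$ (r,c) = (\<Sum>i\<in>{1..n}. (Eii n i \<otimes>\<^sub>K A i) $$ (r,c))"
    using r c by (simp add: msum_def)
  also have "\<dots> = (if r div N = c div N then A (r div N + 1) $$ (r mod N, c mod N) else 0)"
    using \<open>r div N < n\<close> by (simp add: entry sum.delta)
  finally show "?lhs $$ (r,c) = ?rhs $$ (r,c)"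
    using r c by simp
qed (simp_all add: msum_def)

lemma Bmat_eq_mat:
  assumes "Q ` {1..N^n} \<subseteq> carrier_mat N 1"
  shows "Bmat N n n Q = mat (N^Suc n) (N^n) (\<lambda>(r,c). if r div N = c then Q (c+1) $$ (r mod N, 0) else 0)"
    (is "_ = ?rhs")
proof (rule eq_matI)
  fix r c assume "r < dim_row ?rhs" and "c < dim_col ?rhs"
  then have r: "r < N^Suc n" and c: "c < N^n" by auto
  then have "r div N < N^n"
    by (simp add: less_mult_imp_div_less mult.commute)
  have entry: "(Eii (N^n) i \<otimes>\<^sub>K Q i \<otimes>\<^sub>K Eii 1 1) $$ (r,c)
      = (if i = c + 1 then (if r div N = c then Q (c+1) $$ (r mod N, 0) else 0) else 0)"
    if "i \<in> {1..N^n}" for i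
  proof -
    have "Q i \<in> carrier_mat N 1"
      using assms that by blast
    then have "dim_row (Q i) = N" "dim_col (Q i) = 1"
      by auto
    then show ?thesis
      using r c that \<open>r div N < N^n\<close> by (auto simp: index_kron Eii_eq_mat mult.commute)
  qed
  have "{1..N^n} \<times> {1..N^(n-n)} = (\<lambda>i. (i, 1)) ` {1..N^n}"
    by auto
  then have "Bmat N n n Q $$ (r,c) = (\<Sum>i\<in>{1..N^n}. (Eii (N^n) i \<otimes>\<^sub>K Q i \<otimes>\<^sub>K Eii 1 1) $$ (r,c))"
    using r c by (simp add: Bmat_def msum_def sum.reindex inj_on_def)
  also have "\<dots> = (\<Sum>i\<in>{1..N^n}. if i = c + 1 then (if r div N = c then Q (c+1) $$ (r mod N, 0) else 0) else 0)"
    by (intro sum.cong refl entry)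
  also have "\<dots> = (if r div N = c then Q (c+1) $$ (r mod N, 0) else 0)"
    using c by simp
  finally show "Bmat N n n Q $$ (r,c) = ?rhs $$ (r,c)"
    using r c by simp
qed (auto simp: Bmat_def msum_def)

section \<open>Path weights\<close>

text \<open>A path is a number \<open>c < N^K\<close> read as \<open>K\<close> base-\<open>N\<close> digits; its prefix of length \<open>l\<close> is
  \<open>c div N^(K-l)\<close>, which (shifted to 1-based indexing) selects the vector \<open>q^(l)\<close> evaluated
  at digit \<open>l+1\<close>.\<close>

definition path_weight :: "nat \<Rightarrow> nat \<Rightarrow> (nat \<Rightarrow> nat \<Rightarrow> real mat) \<Rightarrow> nat \<Rightarrow> nat \<Rightarrow> real" where
  "path_weight N K QQ n c = (\<Prod>l\<in>{n..<K}. QQ l (c div N^(K-l) + 1) $$ (c div N^(K - Suc l) mod N, 0))"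

lemma path_weight_Suc:
  assumes "n \<le> K"
  shows "path_weight N (Suc K) QQ n c = QQ K (c div N + 1) $$ (c mod N, 0) * path_weight N K QQ n (c div N)"
proof -
  have "c div N div N^(K - l) = c div N^(Suc K - l)" if "l < K" for l
    using that by (simp add: Suc_diff_le div_mult2_eq)
  moreover have "c div N div N^(K - Suc l) = c div N^(Suc K - Suc l)" if "l < K" for l
  proof -
    have "K - l = Suc (K - Suc l)"
      using that by simp
    then show ?thesis
      by (simp add: div_mult2_eq)
  qed
  ultimately have "path_weight N K QQ n (c div N)
      = (\<Prod>l\<in>{n..<K}. QQ l (c div N^(Suc K - l) + 1) $$ (c div N^(Suc K - Suc l) mod N, 0))"
    unfolding path_weight_def by (intro prod.cong) auto
  then show ?thesis
    using assms by (simp add: path_weight_def prod.atLeastLessThan_Suc)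
qed

lemma Bmat_prod_eq:
  assumes "m \<le> K"
    and "\<And>l j. m \<le> l \<Longrightarrow> l < K \<Longrightarrow> 1 \<le> j \<Longrightarrow> j \<le> N^l \<Longrightarrow> QQ l j \<in> carrier_mat N 1"
  shows "foldr (\<lambda>A acc. A * acc) (map (\<lambda>n. Bmat N n n (QQ n)) (rev [m..<K])) (1\<^sub>m (N^m))
    = mat (N^K) (N^m) (\<lambda>(c,y). if c div N^(K-m) = y then path_weight N K QQ m c else 0)"
  using assms
proof (induction K rule: dec_induct)
  case base
  show ?case by (rule eq_matI) (auto simp: path_weight_def)
next
  case (step n)
  have Qn: "QQ n ` {1..N^n} \<subseteq> carrier_mat N 1"
    using step.prems step.hyps by auto
  have "foldr (\<lambda>A acc. A * acc) (map (\<lambda>n. Bmat N n n (QQ n)) (rev [m..<Suc n])) (1\<^sub>m (N^m))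
      = Bmat N n n (QQ n) * mat (N^n) (N^m) (\<lambda>(c,y). if c div N^(n-m) = y then path_weight N n QQ m c else 0)"
    using step by simp
  also have "\<dots> = mat (N^Suc n) (N^m) (\<lambda>(c,y). if c div N^(Suc n-m) = y then path_weight N (Suc n) QQ m c else 0)"
    unfolding Bmat_eq_mat[OF Qn] mat_mult_mat
  proof (rule cong_mat[OF refl refl], unfold prod.case)
    fix c y assume c: "c < N^Suc n" and y: "y < N^m"
    then have "c div N < N^n"
      by (simp add: less_mult_imp_div_less mult.commute)
    have "c div N div N^(n-m) = c div N^(Suc n - m)"
      using step.hyps by (simp add: Suc_diff_le div_mult2_eq)
    have "(\<Sum>t<N^n. (if c div N = t then QQ n (t+1) $$ (c mod N, 0) else 0) *
          (if t div N^(n-m) = y then path_weight N n QQ m t else 0))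
        = (\<Sum>t<N^n. if t = c div N then QQ n (c div N + 1) $$ (c mod N, 0) *
          (if c div N div N^(n-m) = y then path_weight N n QQ m (c div N) else 0) else 0)"
      by (intro sum.cong) auto
    also have "\<dots> = (if c div N^(Suc n - m) = y then path_weight N (Suc n) QQ m c else 0)"
      using \<open>c div N < N^n\<close> \<open>c div N div N^(n-m) = c div N^(Suc n - m)\<close> step.hyps
      by (simp add: path_weight_Suc)
    finally show "(\<Sum>t<N^n. (if c div N = t then QQ n (t+1) $$ (c mod N, 0) else 0) *
          (if t div N^(n-m) = y then path_weight N n QQ m t else 0))
        = (if c div N^(Suc n - m) = y then path_weight N (Suc n) QQ m c else 0)" .
  qed
  finally show ?case .
qed

definition subtree_weight :: "nat \<Rightarrow> nat \<Rightarrow> (nat \<Rightarrow> nat \<Rightarrow> real mat) \<Rightarrow> nat \<Rightarrow> nat \<Rightarrow> nat \<Rightarrow> real" where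
  "subtree_weight N K QQ n p a = (\<Sum>t<N^(K-n).
     if (p * N^(K-n) + t) mod N = a then path_weight N K QQ n (p * N^(K-n) + t) else 0)"

lemma subtree_weight_split:
  assumes "N \<ge> 1" and "n < K"
  shows "subtree_weight N K QQ n p a = (\<Sum>b<N. subtree_weight N K QQ (Suc n) (p*N+b) a * QQ n (p+1) $$ (b,0))"
proof -
  define M where "M = N^(K - Suc n)"
  have NM: "N^(K-n) = N * M"
    unfolding M_def using assms(2) by (simp flip: power_Suc add: Suc_diff_Suc)
  have M0: "M > 0"
    unfolding M_def using assms(1) by simp
  have path: "path_weight N K QQ n ((p*N+u)*M+t) = QQ n (p+1) $$ (u,0) * path_weight N K QQ (Suc n) ((p*N+u)*M+t)"
    if "u < N" "t < M" for u t
  proof -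
    have "((p*N+u)*M+t) div M = p*N+u"
      using that M0 by simp
    moreover have "((p*N+u)*M+t) div (N*M) = p"
      using that by (simp add: div_mult2_eq[of _ M N, unfolded mult.commute[of M N]] \<open>((p*N+u)*M+t) div M = p*N+u\<close>)
    ultimately show ?thesis
      using assms(2) that unfolding path_weight_def M_def NM[unfolded M_def, symmetric]
      by (simp add: prod.atLeast_Suc_lessThan)
  qed
  have "subtree_weight N K QQ n p a
      = (\<Sum>u<N. \<Sum>t<M. if ((p*N+u)*M+t) mod N = a then path_weight N K QQ n ((p*N+u)*M+t) else 0)"
  proof -
    have "p * (N*M) + (u*M + t) = (p*N+u)*M + t" for u t
      by (simp add: algebra_simps)
    then show ?thesis
      unfolding subtree_weight_def NM sum_lessThan_mult_split by (simp only:)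
  qed
  also have "\<dots> = (\<Sum>u<N. \<Sum>t<M. (if ((p*N+u)*M+t) mod N = a then path_weight N K QQ (Suc n) ((p*N+u)*M+t) else 0)
      * QQ n (p+1) $$ (u,0))"
    by (intro sum.cong refl) (simp add: path)
  also have "\<dots> = (\<Sum>b<N. subtree_weight N K QQ (Suc n) (p*N+b) a * QQ n (p+1) $$ (b,0))"
    unfolding subtree_weight_def M_def by (simp add: sum_distrib_right)
  finally show ?thesis .
qed

lemma Qbar_aux_carrier: "Qbar_aux N k QQ d i \<in> carrier_mat N N"
  by (cases d) auto

lemma Qbar_aux_entry:
  assumes "N \<ge> 1" and "1 \<le> m"
    and Q: "\<And>l j. m \<le> l \<Longrightarrow> l \<le> k \<Longrightarrow> 1 \<le> j \<Longrightarrow> j \<le> N^l \<Longrightarrow> QQ l j \<in> carrier_mat N 1"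
  shows "d \<le> Suc k - m \<Longrightarrow> i < N^(k-d) \<Longrightarrow> a < N \<Longrightarrow> b < N \<Longrightarrow>
    Qbar_aux N k QQ d (i+1) $$ (a,b) = subtree_weight N (Suc k) QQ (Suc k - d) (i*N+b) a"
proof (induction d arbitrary: i a b)
  case 0
  then show ?case
    by (simp add: subtree_weight_def path_weight_def)
next
  case (Suc d)
  then have "d < k" "m \<le> k - d"
    using assms(2) by auto
  then have "N^(k-d) = N^(k - Suc d) * N"
    by (metis Suc_diff_Suc power_Suc2)
  then have ib: "i*N+b < N^(k-d)"
    using Suc.prems by (simp add: mult_add_less_mult)
  then have "QQ (k-d) (i*N+b+1) \<in> carrier_mat N 1"
    using Q \<open>d < k\<close> \<open>m \<le> k - d\<close> by simp
  then have "Qbar_aux N k QQ (Suc d) (i+1) $$ (a,b)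
      = (\<Sum>b'<N. Qbar_aux N k QQ d (i*N+b+1) $$ (a,b') * QQ (k-d) (i*N+b+1) $$ (b',0))"
    using Suc.prems Qbar_aux_carrier[of N k QQ d "i*N+b+1"]
    by (auto simp: scalar_prod_def atLeast0LessThan mult.commute)
  also have "\<dots> = (\<Sum>b'<N. subtree_weight N (Suc k) QQ (Suc k - d) ((i*N+b)*N+b') a * QQ (k-d) (i*N+b+1) $$ (b',0))"
    using Suc.IH Suc.prems ib by (intro sum.cong refl) simp
  also have "\<dots> = subtree_weight N (Suc k) QQ (k-d) (i*N+b) a"
    using subtree_weight_split[OF assms(1), of "k-d" "Suc k"] \<open>d < k\<close> by (simp add: Suc_diff_le)
  finally show ?case
    by simp
qed

section \<open>Both sides as explicit matrices\<close>

lemma shift_mat_eq: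
  assumes "N \<ge> 1" and "1 \<le> m" and "m \<le> k"
    and "\<And>l j. m \<le> l \<Longrightarrow> l \<le> k \<Longrightarrow> 1 \<le> j \<Longrightarrow> j \<le> N^l \<Longrightarrow> QQ l j \<in> carrier_mat N 1"
  shows "shift_mat N m k QQ = mat (N^m) (N^m) (\<lambda>(x,y).
    if x mod N^(m-1) = y div N then subtree_weight N (Suc k) QQ m y (x div N^(m-1)) else 0)"
proof -
  define M E where "M = N^(k-m)" and "E = N^(m-1)"
  have NSkm: "N^(Suc k - m) = M*N"
    unfolding M_def using assms(3) by (simp add: Suc_diff_le mult.commute)
  have Nk: "N^k = E * (M*N)"
    unfolding E_def NSkm[symmetric] using assms(2,3) by (simp flip: power_add)
  have NSk: "N^Suc k = N^m * (M*N)"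
    unfolding NSkm[symmetric] using assms(3) by (simp flip: power_add)
  define rot where "rot t = (t mod N * N^k + t div N) div (M*N)" for t
  have "t mod N * N^k + t div N < N^Suc k" if "t < N^Suc k" for t
  proof -
    have "t mod N < N" "t div N < N^k"
      using that assms(1) by (simp_all add: less_mult_imp_div_less mult.commute)
    then show ?thesis
      by (simp add: mult_add_less_mult)
  qed
  then have L: "foldr (\<lambda>A acc. A * acc) (map (\<lambda>n. Mmat N n n) [m..<k+1]) (1\<^sub>m (N^(k+1))) * Cmat N (k+1) 1
      = sel_mat (N^m) (N^Suc k) rot"
    unfolding Mmat_prod_eq_sel_mat[OF assms(1) le_SucI[OF assms(3)], unfolded Suc_eq_plus1]
      Cmat_eq_sel_mat[OF le_add2]
    by (subst sel_mat_mult_sel_mat) (simp_all add: rot_def[abs_def] NSkm comp_def)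
  have R: "foldr (\<lambda>A acc. A * acc) (map (\<lambda>n. Bmat N n n (QQ n)) (rev [m..<k+1])) (1\<^sub>m (N^m))
      = mat (N^Suc k) (N^m) (\<lambda>(c,y). if c div (M*N) = y then path_weight N (Suc k) QQ m c else 0)"
    by (subst Bmat_prod_eq) (use assms(3,4) in \<open>auto simp: NSkm\<close>)
  have "sel_mat (N^m) (N^Suc k) rot
      * mat (N^Suc k) (N^m) (\<lambda>(c,y). if c div (M*N) = y then path_weight N (Suc k) QQ m c else 0)
    = mat (N^m) (N^m) (\<lambda>(x,y). if x mod E = y div N then subtree_weight N (Suc k) QQ m y (x div E) else 0)"
    (is "?lhs = ?rhs")
  proof (rule eq_matI)
    fix x y assume "x < dim_row ?rhs" "y < dim_col ?rhs"
    then have x: "x < N^m" and y: "y < N^m" by simp_all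
    have "y div N < E"
      using y assms(2) unfolding E_def by (simp add: less_mult_imp_div_less flip: power_Suc2)
    have "?lhs $$ (x,y) = (\<Sum>t<N^Suc k. if rot t = x then (if t div (M*N) = y then path_weight N (Suc k) QQ m t else 0) else 0)"
      using x y by (auto simp: index_sel_mat_mult intro!: sum.cong)
    also have "\<dots> = (\<Sum>u<N^m. \<Sum>s<M*N. if rot (u*(M*N)+s) = x then
        (if (u*(M*N)+s) div (M*N) = y then path_weight N (Suc k) QQ m (u*(M*N)+s) else 0) else 0)"
      unfolding NSk sum_lessThan_mult_split ..
    also have "\<dots> = (\<Sum>u<N^m. if u = y then (\<Sum>s<M*N. if s mod N * E + y div N = x then
        path_weight N (Suc k) QQ m (y*(M*N)+s) else 0) else 0)"
    proof (intro sum.cong refl)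
      fix u assume "u \<in> {..<N^m}"
      have "(u*(M*N)+s) div (M*N) = u" if "s < M*N" for s
        using that by (metis add.commute div_less div_mult_self3 add_0_right not_less0)
      then show "(\<Sum>s<M*N. if rot (u*(M*N)+s) = x then
          (if (u*(M*N)+s) div (M*N) = y then path_weight N (Suc k) QQ m (u*(M*N)+s) else 0) else 0)
        = (if u = y then (\<Sum>s<M*N. if s mod N * E + y div N = x then
          path_weight N (Suc k) QQ m (y*(M*N)+s) else 0) else 0)"
        unfolding rot_def Nk by (auto simp: digit_rotation_div intro!: sum.neutral sum.cong)
    qed
    also have "\<dots> = (\<Sum>s<M*N. if x div E = s mod N \<and> x mod E = y div N then
        path_weight N (Suc k) QQ m (y*(M*N)+s) else 0)"
      using y \<open>y div N < E\<close> by (simp add: mult_add_eq_iff_div_mod)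
    also have "\<dots> = (if x mod E = y div N then subtree_weight N (Suc k) QQ m y (x div E) else 0)"
    proof -
      have "(y*(M*N)+s) mod N = s mod N" for s
        by (simp add: mult.assoc[symmetric])
      then show ?thesis
        unfolding subtree_weight_def NSkm by (auto intro: sum.cong)
    qed
    finally show "?lhs $$ (x,y) = ?rhs $$ (x,y)"
      using x y by simp
  qed (simp_all add: sel_mat_def)
  then show ?thesis
    unfolding shift_mat_def L R E_def .
qed

lemma Qbar_entry:
  assumes "N \<ge> 1" and "1 \<le> m" and "m \<le> k"
    and "\<And>l j. m \<le> l \<Longrightarrow> l \<le> k \<Longrightarrow> 1 \<le> j \<Longrightarrow> j \<le> N^l \<Longrightarrow> QQ l j \<in> carrier_mat N 1"
    and "i < N^(m-1)" and "a < N" and "b < N"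
  shows "Qbar N k QQ m (i+1) $$ (a,b) = subtree_weight N (Suc k) QQ m (i*N+b) a"
proof -
  have "Qbar_aux N k QQ (Suc k - m) (i+1) $$ (a,b) = subtree_weight N (Suc k) QQ (Suc k - (Suc k - m)) (i*N+b) a"
    by (rule Qbar_aux_entry) (use assms in auto)
  then show ?thesis
    using assms(3) by (simp add: Qbar_def)
qed

lemma Cmat_mult_Qbar_block_diag_eq:
  assumes "N \<ge> 1" and "1 \<le> m" and "m \<le> k"
    and "\<And>l j. m \<le> l \<Longrightarrow> l \<le> k \<Longrightarrow> 1 \<le> j \<Longrightarrow> j \<le> N^l \<Longrightarrow> QQ l j \<in> carrier_mat N 1"
  shows "Cmat N m 1 * msum (N^m) (N^m) (\<lambda>i. Eii (N^(m-1)) i \<otimes>\<^sub>K Qbar N k QQ m i) {1..N^(m-1)}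
    = mat (N^m) (N^m) (\<lambda>(x,y).
      if x mod N^(m-1) = y div N then subtree_weight N (Suc k) QQ m y (x div N^(m-1)) else 0)"
proof -
  define E where "E = N^(m-1)"
  have NmE: "N^m = E * N"
    unfolding E_def using assms(2) by (simp flip: power_Suc2)
  have block_diag: "msum (N^m) (N^m) (\<lambda>i. Eii E i \<otimes>\<^sub>K Qbar N k QQ m i) {1..E}
      = mat (N^m) (N^m) (\<lambda>(r,c). if r div N = c div N then Qbar N k QQ m (r div N + 1) $$ (r mod N, c mod N) else 0)"
    unfolding NmE by (rule msum_Eii_kron_eq_block_diag) (simp add: Qbar_def Qbar_aux_carrier)
  have "sel_mat (N^m) (N^m) (\<lambda>c. c mod N * E + c div N) * mat (N^m) (N^m) (\<lambda>(r,c).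
      if r div N = c div N then Qbar N k QQ m (r div N + 1) $$ (r mod N, c mod N) else 0)
    = mat (N^m) (N^m) (\<lambda>(x,y). if x mod E = y div N then subtree_weight N (Suc k) QQ m y (x div E) else 0)"
    (is "?lhs = ?rhs")
  proof (rule eq_matI)
    fix x y assume "x < dim_row ?rhs" "y < dim_col ?rhs"
    then have x: "x < N^m" and y: "y < N^m" by simp_all
    have "x div E < N" "y div N < E" "0 < N" "0 < E"
      using x y assms(1) by (simp_all add: NmE less_mult_imp_div_less mult.commute E_def)
    define r where "r = x mod E * N + x div E"
    have r: "r < N^m"
      unfolding r_def NmE using \<open>0 < E\<close> \<open>x div E < N\<close> by (simp add: mult_add_less_mult)
    have "(r' mod N * E + r' div N = x) \<longleftrightarrow> r' = r" if "r' < N^m" for r'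
      using that \<open>x div E < N\<close> unfolding r_def NmE
      by (auto simp: mult_add_eq_iff_div_mod less_mult_imp_div_less)
    then have "?lhs $$ (x,y) = (if x mod E = y div N then Qbar N k QQ m (x mod E + 1) $$ (x div E, y mod N) else 0)"
      using x y r \<open>x div E < N\<close> by (simp add: index_sel_mat_mult r_def cong: if_cong)
    also have "\<dots> = (if x mod E = y div N then subtree_weight N (Suc k) QQ m y (x div E) else 0)"
    proof -
      have "x mod E < N^(m-1)"
        using \<open>0 < E\<close> by (simp add: E_def)
      then have "Qbar N k QQ m (x mod E + 1) $$ (x div E, y mod N)
          = subtree_weight N (Suc k) QQ m (x mod E * N + y mod N) (x div E)"
        using \<open>x div E < N\<close> \<open>0 < N\<close> by (intro Qbar_entry) (use assms in auto)
      then show ?thesis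
        using div_mult_mod_eq[of y N] by auto
    qed
    finally show "?lhs $$ (x,y) = ?rhs $$ (x,y)"
      using x y by simp
  qed (simp_all add: sel_mat_def)
  then show ?thesis
    unfolding Cmat_eq_sel_mat[OF assms(2)] E_def block_diag[unfolded E_def] .
qed

theorem lemma1:
  fixes N k m :: nat and QQ :: "nat \<Rightarrow> nat \<Rightarrow> real mat"
  assumes "N \<ge> 1" and "k \<ge> 1" and "1 \<le> m" and "m \<le> k"
    and "\<And>n l. m \<le> n \<Longrightarrow> n \<le> k \<Longrightarrow> 1 \<le> l \<Longrightarrow> l \<le> N^n \<Longrightarrow> prob_vec N (QQ n l)"
  shows "shift_mat N m k QQ =
    Cmat N m 1 * msum (N^m) (N^m) (\<lambda>i. Eii (N^(m-1)) i \<otimes>\<^sub>K Qbar N k QQ m i) {1..N^(m-1)}"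
proof -
  have "QQ l j \<in> carrier_mat N 1" if "m \<le> l" "l \<le> k" "1 \<le> j" "j \<le> N^l" for l j
    using assms(5)[OF that] by (simp add: prob_vec_def)
  then show ?thesis
    using shift_mat_eq[OF assms(1,3,4)] Cmat_mult_Qbar_block_diag_eq[OF assms(1,3,4)] by simp
qed

end
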